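(* Consider the block hyper-$g$ regression model with blocks $X_1,\dots,X_k$ ($X_i$ of size $n\times p_i$) satisfying the block orthogonality condition below, and the sequence of problems $\Psi_N$ with data $y_N=\alpha\mathbf 1+X_1\beta_{1(N)}+X_2\beta_2+\dots+X_k\beta_k+\epsilon$, where $X_1,\dots,X_k,\alpha,\beta_2,\dots,\beta_k,\epsilon$ are held fixed and $\|\beta_{1(N)}\|\to\infty$ as $N\to\infty$. Then, as $N\to\infty$, $R_1^2\to1$ and $R_i^2\to0$ for all $i\neq1$.
   Context: Block hyper-$g$ prior with hyperparameter $2<a\le4$: $y\mid\alpha,\beta,\sigma^2\sim N(\alpha\mathbf 1+X\beta,\sigma^2I)$ with $X=(X_1,\dots,X_k)$ of full column rank, $\beta=(\beta_1^T,\dots,\beta_k^T)^T$; $\beta\mid g,\sigma^2\sim N(0,A\sigma^2)$ with $A$ block diagonal with blocks $g_i(X_i^TX_i)^{-1}$; $\pi(\alpha,\sigma^2)\propto1/\sigma^2$; $g_1,\dots,g_k$ independent with densities $\frac{a-2}{2}(1+g_i)^{-a/2}$, $g_i>0$. Block orthogonality condition: the predictors and the response are centered ($\mathbf 1^TX_i=0$, $\mathbf 1^Ty=0$) and $X_i^TX_j=0$ for $i\ne j$. $R_i^2=y^TP_{X_i}y/y^Ty$, where $P_{X_i}$ is the orthogonal projection onto the column space of $X_i$; $n>p+1$ with $p=\sum_ip_i$. *)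

theory Defs
  imports "HOL-Analysis.Analysis"
begin

text \<open>Observations live in R^n, represented as real^'n (n = CARD('n)).
  A block X_i is given by its columns: col i j :: real^'n for j < p i.\<close>

definition block_mult :: "(nat \<Rightarrow> real^'n) \<Rightarrow> nat \<Rightarrow> (nat \<Rightarrow> real) \<Rightarrow> real^'n" where
  "block_mult c q b = (\<Sum>j<q. b j *\<^sub>R c j)"

definition orth_proj :: "('a::euclidean_space) set \<Rightarrow> 'a \<Rightarrow> 'a" where
  "orth_proj S y = (THE q. q \<in> span S \<and> (\<forall>w\<in>span S. (y - q) \<bullet> w = 0))"

definition Rsq :: "(nat \<Rightarrow> real^'n) \<Rightarrow> nat \<Rightarrow> real^'n \<Rightarrow> real" where
  "Rsq c q y = (y \<bullet> orth_proj (c ` {..<q}) y) / (y \<bullet> y)"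

definition ones :: "real^'n" where "ones = (\<chi> a. 1)"

end

theory Submission
  imports Defs
begin

text \<open>Write \<open>y\<^sub>N = u\<^sub>N + w\<close> with \<open>u\<^sub>N = X\<^sub>1 \<beta>\<^sub>1(N)\<close> in the column space of
  \<open>X\<^sub>1\<close> and \<open>w\<close> fixed. Full column rank gives \<open>\<parallel>\<beta>\<^sub>1(N)\<parallel> \<le> K \<parallel>u\<^sub>N\<parallel>\<close>, so
  \<open>\<parallel>u\<^sub>N\<parallel> \<rightarrow> \<infinity>\<close>. Since \<open>P\<^sub>1 u\<^sub>N = u\<^sub>N\<close>, \<open>R\<^sub>1\<^sup>2 = \<parallel>u\<^sub>N + P\<^sub>1 w\<parallel>\<^sup>2 / \<parallel>u\<^sub>N + w\<parallel>\<^sup>2\<close>,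
  and both norms are \<open>\<parallel>u\<^sub>N\<parallel> + O(1)\<close>. For \<open>i \<noteq> 1\<close> block orthogonality gives
  \<open>P\<^sub>i u\<^sub>N = 0\<close>, so the numerator \<open>\<parallel>P\<^sub>i w\<parallel>\<^sup>2\<close> of \<open>R\<^sub>i\<^sup>2\<close> is fixed while the denominator
  diverges.\<close>

lemma orth_proj_eqI:
  fixes S :: "'a::euclidean_space set"
  assumes q: "q \<in> span S" and residual: "\<And>v. v \<in> span S \<Longrightarrow> (y - q) \<bullet> v = 0"
  shows "orth_proj S y = q"
  unfolding orth_proj_def
proof (rule the_equality)
  fix q' assume q': "q' \<in> span S \<and> (\<forall>v\<in>span S. (y - q') \<bullet> v = 0)"
  have "q - q' \<in> span S" using q q' span_diff by blast
  then have "(y - q') \<bullet> (q - q') = 0" "(y - q) \<bullet> (q - q') = 0" using q' residual by auto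
  then have "(q - q') \<bullet> (q - q') = 0" by (simp add: inner_diff_left inner_diff_right)
  then show "q' = q" by simp
qed (use assms in blast)

lemma orth_proj_spec:
  fixes S :: "'a::euclidean_space set"
  shows "orth_proj S y \<in> span S"
    and "v \<in> span S \<Longrightarrow> (y - orth_proj S y) \<bullet> v = 0"
proof -
  obtain a z where a: "a \<in> span S" and z: "\<And>v. v \<in> span S \<Longrightarrow> orthogonal z v" and "y = a + z"
    using orthogonal_subspace_decomp_exists by blast
  then have residual: "\<And>v. v \<in> span S \<Longrightarrow> (y - a) \<bullet> v = 0" by (simp add: orthogonal_def)
  have "orth_proj S y = a" using orth_proj_eqI[OF a residual] .
  then show "orth_proj S y \<in> span S" and "v \<in> span S \<Longrightarrow> (y - orth_proj S y) \<bullet> v = 0"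
    using a residual by auto
qed

lemma inner_orth_proj_self:
  fixes S :: "'a::euclidean_space set"
  shows "y \<bullet> orth_proj S y = (norm (orth_proj S y))\<^sup>2"
proof -
  have "(y - orth_proj S y) \<bullet> orth_proj S y = 0" using orth_proj_spec by blast
  then show ?thesis by (simp add: inner_diff_left power2_norm_eq_inner)
qed

lemma orth_proj_add:
  fixes S :: "'a::euclidean_space set"
  shows "orth_proj S (x + y) = orth_proj S x + orth_proj S y"
proof (rule orth_proj_eqI)
  show "orth_proj S x + orth_proj S y \<in> span S" using orth_proj_spec(1) span_add by blast
  fix v assume "v \<in> span S"
  then have "(x - orth_proj S x) \<bullet> v = 0" "(y - orth_proj S y) \<bullet> v = 0" using orth_proj_spec(2) by blast+
  then show "(x + y - (orth_proj S x + orth_proj S y)) \<bullet> v = 0"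
    by (simp add: inner_diff_left inner_add_left)
qed

lemma orth_proj_span:
  fixes S :: "'a::euclidean_space set"
  assumes "x \<in> span S"
  shows "orth_proj S x = x"
  using assms by (intro orth_proj_eqI) auto

lemma orth_proj_orthogonal:
  fixes S :: "'a::euclidean_space set"
  assumes "\<And>v. v \<in> S \<Longrightarrow> x \<bullet> v = 0"
  shows "orth_proj S x = 0"
proof (rule orth_proj_eqI)
  fix v assume "v \<in> span S"
  then have "orthogonal x v" by (rule orthogonal_to_span) (use assms in \<open>simp add: orthogonal_def\<close>)
  then show "(x - 0) \<bullet> v = 0" by (simp add: orthogonal_def)
qed (rule span_zero)

lemma block_mult_in_span: "block_mult c q d \<in> span (c ` {..<q})"
  unfolding block_mult_def by (intro span_sum span_scale span_base) auto

lemma block_mult_orthogonal: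
  assumes "\<And>j. j < q \<Longrightarrow> c j \<bullet> v = 0"
  shows "block_mult c q d \<bullet> v = 0"
  unfolding block_mult_def inner_sum_left using assms by (intro sum.neutral) auto

lemma block_full_rank_of_joint_full_rank:
  fixes col :: "nat \<Rightarrow> nat \<Rightarrow> real^'n"
  assumes "finite I" and "m \<in> I"
    and joint: "\<And>c. (\<Sum>i\<in>I. block_mult (col i) (p i) (c i)) = 0 \<Longrightarrow> \<forall>i\<in>I. \<forall>j<p i. c i j = 0"
    and "block_mult (col m) (p m) d = 0" and "j < p m"
  shows "d j = 0"
proof -
  define c where "c i = (if i = m then d else (\<lambda>_. 0))" for i
  have "(\<Sum>i\<in>I. block_mult (col i) (p i) (c i)) = (\<Sum>i\<in>I. if i = m then block_mult (col m) (p m) d else 0)"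
    by (intro sum.cong) (auto simp: c_def block_mult_def)
  also have "\<dots> = 0" using assms by simp
  finally have "\<forall>i\<in>I. \<forall>j<p i. c i j = 0" by (rule joint)
  then have "c m j = 0" using \<open>m \<in> I\<close> \<open>j < p m\<close> by blast
  then show ?thesis by (simp add: c_def)
qed

context
  fixes c :: "nat \<Rightarrow> real^'n" and q :: nat
  assumes full_rank: "\<And>d j. block_mult c q d = 0 \<Longrightarrow> j < q \<Longrightarrow> d j = 0"
begin

lemma inj_on_cols: "inj_on c {..<q}"
proof (rule inj_onI, rule ccontr)
  fix a b assume a: "a \<in> {..<q}" and b: "b \<in> {..<q}" and eq: "c a = c b" and "a \<noteq> b"
  define d where "d j = (if j = a then 1 else 0) - (if j = b then 1 else (0::real))" for j
  have "block_mult c q d = (\<Sum>j<q. if j = a then c j else 0) - (\<Sum>j<q. if j = b then c j else 0)"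
    unfolding block_mult_def sum_subtractf[symmetric]
    by (intro sum.cong) (auto simp: d_def scaleR_left_diff_distrib)
  also have "\<dots> = 0" using a b eq by simp
  finally have "d a = 0" using full_rank a by blast
  with \<open>a \<noteq> b\<close> show False by (simp add: d_def)
qed

lemma independent_cols: "independent (c ` {..<q})"
proof
  assume "dependent (c ` {..<q})"
  then obtain e where e: "\<exists>v\<in>c ` {..<q}. e v \<noteq> 0" and "(\<Sum>v\<in>c ` {..<q}. e v *\<^sub>R v) = 0"
    using dependent_finite[of "c ` {..<q}"] by auto
  moreover have "(\<Sum>v\<in>c ` {..<q}. e v *\<^sub>R v) = block_mult c q (\<lambda>j. e (c j))"
    unfolding block_mult_def using sum.reindex[OF inj_on_cols, of "\<lambda>v. e v *\<^sub>R v"] by simp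
  ultimately have "e (c j) = 0" if "j < q" for j using full_rank that by metis
  with e show False by auto
qed

lemma block_mult_coeff_functional:
  assumes "j < q"
  obtains g :: "real^'n \<Rightarrow> real" where "linear g" and "\<And>d. g (block_mult c q d) = d j"
proof -
  obtain g :: "real^'n \<Rightarrow> real"
    where g: "linear g" "\<forall>v\<in>c ` {..<q}. g v = (if v = c j then 1 else 0)"
    using linear_independent_extend[OF independent_cols, of "\<lambda>v. if v = c j then 1 else 0"] by blast
  have g_col: "g (c i) = (if i = j then 1 else 0)" if "i < q" for i
  proof -
    have "g (c i) = (if c i = c j then 1 else 0)" using g(2) that by simp
    moreover have "c i = c j \<longleftrightarrow> i = j" using inj_on_eq_iff[OF inj_on_cols] that assms by simp
    ultimately show ?thesis by simp
  qed
  have "g (block_mult c q d) = d j" for d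
  proof -
    have "g (block_mult c q d) = (\<Sum>i<q. d i * g (c i))"
      unfolding block_mult_def by (simp add: linear_sum[OF g(1)] linear_scale[OF g(1)])
    also have "\<dots> = (\<Sum>i<q. if i = j then d i else 0)" using g_col by (intro sum.cong) auto
    also have "\<dots> = d j" using assms by simp
    finally show ?thesis .
  qed
  with g(1) that show thesis by blast
qed

lemma abs_coeff_le_norm_block_mult:
  assumes "j < q"
  obtains B where "B > 0" and "\<And>d. \<bar>d j\<bar> \<le> B * norm (block_mult c q d)"
proof -
  obtain g where "linear g" and g: "\<And>d. g (block_mult c q d) = d j"
    using block_mult_coeff_functional[OF assms] by blast
  then obtain B where "B > 0" and "\<And>x. norm (g x) \<le> B * norm x"
    using linear_bounded_pos by blast
  then show thesis using that[of B] g by (metis real_norm_def)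
qed

lemma L2_set_coeffs_le_norm_block_mult:
  obtains K where "K > 0" and "\<And>d. L2_set d {..<q} \<le> K * norm (block_mult c q d)"
proof -
  have "\<forall>j\<in>{..<q}. \<exists>B>0. \<forall>d. \<bar>d j\<bar> \<le> B * norm (block_mult c q d)"
  proof
    fix j assume "j \<in> {..<q}"
    then obtain B where "B > 0" "\<And>d. \<bar>d j\<bar> \<le> B * norm (block_mult c q d)"
      using abs_coeff_le_norm_block_mult by blast
    then show "\<exists>B>0. \<forall>d. \<bar>d j\<bar> \<le> B * norm (block_mult c q d)" by blast
  qed
  from bchoice[OF this]
  obtain B where B: "\<forall>j\<in>{..<q}. B j > 0 \<and> (\<forall>d. \<bar>d j\<bar> \<le> B j * norm (block_mult c q d))"
    by blast
  have "L2_set d {..<q} \<le> (1 + (\<Sum>j<q. B j)) * norm (block_mult c q d)" for d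
  proof -
    have "L2_set d {..<q} \<le> (\<Sum>j<q. \<bar>d j\<bar>)" by (rule L2_set_le_sum_abs)
    also have "\<dots> \<le> (\<Sum>j<q. B j * norm (block_mult c q d))" using B by (intro sum_mono) auto
    also have "\<dots> \<le> (1 + (\<Sum>j<q. B j)) * norm (block_mult c q d)"
      by (simp add: sum_distrib_right distrib_right)
    finally show ?thesis .
  qed
  moreover have "1 + (\<Sum>j<q. B j) > 0" using B by (smt (verit) sum_nonneg)
  ultimately show thesis using that by blast
qed

lemma filterlim_norm_block_mult_at_top:
  assumes "filterlim (\<lambda>N. L2_set (b N) {..<q}) at_top F"
  shows "filterlim (\<lambda>N. norm (block_mult c q (b N))) at_top F"
proof -
  obtain K where K: "K > 0" "\<And>d. L2_set d {..<q} \<le> K * norm (block_mult c q d)"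
    using L2_set_coeffs_le_norm_block_mult by blast
  have "filterlim (\<lambda>N. (1/K) * L2_set (b N) {..<q}) at_top F"
    using K(1) by (intro filterlim_tendsto_pos_mult_at_top[OF tendsto_const _ assms]) simp
  moreover have "\<forall>\<^sub>F N in F. (1/K) * L2_set (b N) {..<q} \<le> norm (block_mult c q (b N))"
    using K by (intro always_eventually allI) (simp add: field_simps)
  ultimately show ?thesis by (rule filterlim_at_top_mono)
qed

end

lemma norm_add_div_norm_tendsto_1:
  fixes u :: "'b \<Rightarrow> 'a::real_normed_vector"
  assumes u: "filterlim (\<lambda>N. norm (u N)) at_top F"
  shows "((\<lambda>N. norm (u N + a) / norm (u N)) \<longlongrightarrow> 1) F"
proof (rule LIM_zero_cancel, rule Lim_null_comparison)
  have "\<forall>\<^sub>F N in F. norm (u N) > 0"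
    using u unfolding filterlim_at_top_dense by blast
  then show "\<forall>\<^sub>F N in F. norm (norm (u N + a) / norm (u N) - 1) \<le> norm a / norm (u N)"
  proof eventually_elim
    case (elim N)
    have "norm (u N + a) / norm (u N) - 1 = (norm (u N + a) - norm (u N)) / norm (u N)"
      using elim by (simp add: field_simps)
    moreover have "\<bar>norm (u N + a) - norm (u N)\<bar> \<le> norm a"
      using norm_triangle_ineq3[of "u N + a" "u N"] by simp
    ultimately show ?case using elim by (simp add: abs_divide divide_right_mono)
  qed
  show "((\<lambda>N. norm a / norm (u N)) \<longlongrightarrow> 0) F"
    by (rule tendsto_divide_0[OF tendsto_const filterlim_at_top_imp_at_infinity[OF u]])
qed

lemma inner_orth_proj_ratio_tendsto_1:
  fixes S :: "'a::euclidean_space set"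
  assumes span: "\<And>N. u N \<in> span S" and u: "filterlim (\<lambda>N. norm (u N)) at_top F"
  shows "((\<lambda>N. (u N + w) \<bullet> orth_proj S (u N + w) / ((u N + w) \<bullet> (u N + w))) \<longlongrightarrow> 1) F"
proof -
  let ?r = "\<lambda>N. (norm (u N + orth_proj S w) / norm (u N))\<^sup>2 / (norm (u N + w) / norm (u N))\<^sup>2"
  have "(?r \<longlongrightarrow> 1\<^sup>2 / 1\<^sup>2) F"
    by (intro tendsto_intros norm_add_div_norm_tendsto_1[OF u]) simp
  moreover have "\<forall>\<^sub>F N in F. norm (u N) > 0"
    using u unfolding filterlim_at_top_dense by blast
  then have "\<forall>\<^sub>F N in F. ?r N = (u N + w) \<bullet> orth_proj S (u N + w) / ((u N + w) \<bullet> (u N + w))"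
  proof eventually_elim
    case (elim N)
    have "(u N + w) \<bullet> orth_proj S (u N + w) = (norm (u N + orth_proj S w))\<^sup>2"
      using inner_orth_proj_self[of "u N + w" S] by (simp add: orth_proj_add orth_proj_span[OF span])
    then show ?case using elim by (simp add: power_divide flip: power2_norm_eq_inner)
  qed
  ultimately show ?thesis by (simp add: tendsto_cong)
qed

lemma inner_orth_proj_ratio_tendsto_0:
  fixes S :: "'a::euclidean_space set"
  assumes orth: "\<And>N v. v \<in> S \<Longrightarrow> u N \<bullet> v = 0" and u: "filterlim (\<lambda>N. norm (u N)) at_top F"
  shows "((\<lambda>N. (u N + w) \<bullet> orth_proj S (u N + w) / ((u N + w) \<bullet> (u N + w))) \<longlongrightarrow> 0) F"
proof -
  have "orth_proj S (u N + w) = orth_proj S w" for N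
    by (simp add: orth_proj_add orth_proj_orthogonal[OF orth])
  then have ratio: "(u N + w) \<bullet> orth_proj S (u N + w) / ((u N + w) \<bullet> (u N + w))
                    = (norm (orth_proj S w))\<^sup>2 / (norm (u N + w))\<^sup>2" for N
    by (metis inner_orth_proj_self power2_norm_eq_inner)
  have "filterlim (\<lambda>N. - norm w + norm (u N)) at_top F"
    by (rule filterlim_tendsto_add_at_top[OF tendsto_const u])
  then have "filterlim (\<lambda>N. norm (u N + w)) at_top F"
    by (rule filterlim_at_top_mono) (use norm_diff_ineq in \<open>auto intro!: always_eventually\<close>)
  then have "filterlim (\<lambda>N. (norm (u N + w))\<^sup>2) at_infinity F"
    by (intro filterlim_at_top_imp_at_infinity filterlim_pow_at_top) auto
  then have "((\<lambda>N. (norm (orth_proj S w))\<^sup>2 / (norm (u N + w))\<^sup>2) \<longlongrightarrow> 0) F"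
    by (rule tendsto_divide_0[OF tendsto_const])
  then show ?thesis by (simp only: ratio)
qed

theorem lemma4p1:
  fixes k :: nat and p :: "nat \<Rightarrow> nat"
    and col :: "nat \<Rightarrow> nat \<Rightarrow> real^'n"
    and \<alpha> :: real and \<beta> :: "nat \<Rightarrow> nat \<Rightarrow> real"
    and b1 :: "nat \<Rightarrow> nat \<Rightarrow> real"
    and \<epsilon> :: "real^'n"
    and y :: "nat \<Rightarrow> real^'n"
  assumes k: "k \<ge> 1"
    and n_gt: "CARD('n) > (\<Sum>i=1..k. p i) + 1"
    and full_rank: "\<And>c. (\<Sum>i=1..k. block_mult (col i) (p i) (c i)) = 0 \<Longrightarrow>
                      \<forall>i\<in>{1..k}. \<forall>j<p i. c i j = 0"
    and centered_X: "\<And>i j. i \<in> {1..k} \<Longrightarrow> j < p i \<Longrightarrow> ones \<bullet> col i j = 0"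
    and orth: "\<And>i j a b. i \<in> {1..k} \<Longrightarrow> j \<in> {1..k} \<Longrightarrow> i \<noteq> j \<Longrightarrow>
                 a < p i \<Longrightarrow> b < p j \<Longrightarrow> col i a \<bullet> col j b = 0"
    and y_def: "\<And>N. y N = \<alpha> *\<^sub>R ones + block_mult (col 1) (p 1) (b1 N)
                   + (\<Sum>i=2..k. block_mult (col i) (p i) (\<beta> i)) + \<epsilon>"
    and centered_y: "\<And>N. ones \<bullet> y N = 0"
    and diverge: "filterlim (\<lambda>N. sqrt (\<Sum>j<p 1. (b1 N j)\<^sup>2)) at_top sequentially"
  shows "(\<lambda>N. Rsq (col 1) (p 1) (y N)) \<longlonglongrightarrow> 1
         \<and> (\<forall>i\<in>{2..k}. (\<lambda>N. Rsq (col i) (p i) (y N)) \<longlonglongrightarrow> 0)"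
proof -
  define u where "u N = block_mult (col 1) (p 1) (b1 N)" for N
  define w where "w = \<alpha> *\<^sub>R ones + (\<Sum>i=2..k. block_mult (col i) (p i) (\<beta> i)) + \<epsilon>"
  have y_split: "y N = u N + w" for N
    using y_def by (simp add: u_def w_def algebra_simps)
  have full_rank_1: "block_mult (col 1) (p 1) d = 0 \<Longrightarrow> j < p 1 \<Longrightarrow> d j = 0" for d j
    using block_full_rank_of_joint_full_rank[OF _ _ full_rank] k by auto
  have u_at_top: "filterlim (\<lambda>N. norm (u N)) at_top sequentially"
    unfolding u_def
  proof (rule filterlim_norm_block_mult_at_top)
    show "filterlim (\<lambda>N. L2_set (b1 N) {..<p 1}) at_top sequentially"
      using diverge by (simp only: L2_set_def)
  qed (rule full_rank_1)
  have "(\<lambda>N. Rsq (col 1) (p 1) (y N)) \<longlonglongrightarrow> 1"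
    unfolding Rsq_def y_split
    by (rule inner_orth_proj_ratio_tendsto_1[OF _ u_at_top]) (simp add: u_def block_mult_in_span)
  moreover have "(\<lambda>N. Rsq (col i) (p i) (y N)) \<longlonglongrightarrow> 0" if i: "i \<in> {2..k}" for i
    unfolding Rsq_def y_split
  proof (rule inner_orth_proj_ratio_tendsto_0[OF _ u_at_top])
    fix N v assume "v \<in> col i ` {..<p i}"
    then show "u N \<bullet> v = 0"
      unfolding u_def using orth[of 1 i] k i by (auto intro!: block_mult_orthogonal)
  qed
  ultimately show ?thesis by blast
qed

end
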